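(* Let $n\ge 3$, let $J_n\in M_n(\mathbb{C})$ be the nilpotent Jordan block $J_n=\sum_{i=1}^{n-1}E_{i,i+1}$, and let $B_n=E_{n-1,1}-E_{n,2}\in M_n(\mathbb{C})$. Then $\mathcal L(\{J_n,B_n\})=M_n(\mathbb{C})$, $l(\{J_n,B_n\})=2n-3$, and $l_0(\{J_n,B_n\})=2n-2$.
   Context: $E_{i,j}$ denotes the matrix unit with $1$ in position $(i,j)$ and $0$ elsewhere. For a finite subset $\mathcal S$ of $M_n(\mathbb{F})$: a word of length $m$ is a product $S_1\cdots S_m$ with $S_j\in\mathcal S$, the word of length $0$ being $I_n$. $\mathcal L_k(\mathcal S)$ is the span of words of length at most $k$ including $I_n$; $\mathcal L(\mathcal S)=\bigcup_k\mathcal L_k(\mathcal S)$; $\mathcal L_k^0(\mathcal S)$ is the span of words of length between $1$ and $k$ (identity not automatically included). $l(\mathcal S)$ is the smallest $k$ with $\mathcal L_k(\mathcal S)=\mathcal L_{k+1}(\mathcal S)$, and $l_0(\mathcal S)$ is the smallest $k$ with $\mathcal L^0_k(\mathcal S)=\mathcal L^0_{k+1}(\mathcal S)$. *)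

theory Defs
  imports "Jordan_Normal_Form.Matrix"
begin

text \<open>Matrices of size n x n are elements of carrier_mat n n; indices are 0-based,
  so the paper's E_{i,j} is the unit at position (i-1, j-1).\<close>

definition unit_mat :: "nat \<Rightarrow> nat \<Rightarrow> nat \<Rightarrow> 'a::{zero,one} mat" where
  "unit_mat n i j = mat n n (\<lambda>(a,b). if a = i \<and> b = j then 1 else 0)"

definition word_prod :: "nat \<Rightarrow> 'a::semiring_1 mat list \<Rightarrow> 'a mat" where
  "word_prod n ws = foldr (*) ws (1\<^sub>m n)"

definition lin_comb :: "nat \<Rightarrow> ('a::comm_ring_1 \<times> 'a mat) list \<Rightarrow> 'a mat" where
  "lin_comb n cs = foldr (\<lambda>(c,A) acc. c \<cdot>\<^sub>m A + acc) cs (0\<^sub>m n n)"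

definition mat_span :: "nat \<Rightarrow> 'a::comm_ring_1 mat set \<Rightarrow> 'a mat set" where
  "mat_span n A = {lin_comb n cs | cs. set (map snd cs) \<subseteq> A}"

definition words :: "nat \<Rightarrow> 'a::semiring_1 mat set \<Rightarrow> nat \<Rightarrow> nat \<Rightarrow> 'a mat set" where
  "words n S a b = {word_prod n ws | ws. set ws \<subseteq> S \<and> a \<le> length ws \<and> length ws \<le> b}"

definition Lk :: "nat \<Rightarrow> 'a::comm_ring_1 mat set \<Rightarrow> nat \<Rightarrow> 'a mat set" where
  "Lk n S k = mat_span n (words n S 0 k)"

definition L0k :: "nat \<Rightarrow> 'a::comm_ring_1 mat set \<Rightarrow> nat \<Rightarrow> 'a mat set" where
  "L0k n S k = mat_span n (words n S 1 k)"

definition Lalg :: "nat \<Rightarrow> 'a::comm_ring_1 mat set \<Rightarrow> 'a mat set" where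
  "Lalg n S = (\<Union>k. Lk n S k)"

definition lenL :: "nat \<Rightarrow> 'a::comm_ring_1 mat set \<Rightarrow> nat" where
  "lenL n S = (LEAST k. Lk n S k = Lk n S (Suc k))"

definition lenL0 :: "nat \<Rightarrow> 'a::comm_ring_1 mat set \<Rightarrow> nat" where
  "lenL0 n S = (LEAST k. L0k n S k = L0k n S (Suc k))"

definition Jblock :: "nat \<Rightarrow> complex mat" where
  "Jblock n = mat n n (\<lambda>(i,j). if j = Suc i then 1 else 0)"

definition Bmat :: "nat \<Rightarrow> complex mat" where
  "Bmat n = unit_mat n (n-2) 0 - unit_mat n (n-1) 1"

end

theory Submission
  imports Defs
begin

text \<open>
  Every letter J raises the offset j - i of a nonzero entry (i, j) of a word by 1 and every letter
  B lowers it by n - 1, so the entries in which a word of length m with b letters B can be nonzero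
  satisfy j - i = m - b (n - 1).  This grading yields, for each length k < 2n - 3, a linear functional
  (an entry, or the difference of two entries on the same superdiagonal) vanishing on all words of
  length at most k but not on one of length k + 1; for nonunital words the trace plays this role at
  length 2n - 2.  Conversely, explicit words with at most two letters B equal (up to sign) every
  E(i, j) with i > j, every E(0, d), and every difference E(r, r+d) - E(r+1, r+1+d); together with
  I, respectively with E(0,0) + E(1,1) = J^(n-2) B J^(n-2) B, they span all of M_n.
\<close>

lemma lin_comb_carrier:
  "set (map snd cs) \<subseteq> carrier_mat n n \<Longrightarrow> lin_comb n cs \<in> carrier_mat n n"
  by (induction cs) (auto simp: lin_comb_def)

lemma index_lin_comb:
  assumes "set (map snd cs) \<subseteq> carrier_mat n n" "i < n" "j < n"
  shows "lin_comb n cs $$ (i, j) = (\<Sum>(c, A)\<leftarrow>cs. c * A $$ (i, j))"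
  using assms
proof (induction cs)
  case Nil then show ?case by (simp add: lin_comb_def)
next
  case (Cons a cs)
  obtain c A where a: "a = (c, A)" by fastforce
  have A: "A \<in> carrier_mat n n" using Cons a by auto
  have L: "lin_comb n cs \<in> carrier_mat n n" using Cons by (intro lin_comb_carrier) auto
  have "lin_comb n (a # cs) = c \<cdot>\<^sub>m A + lin_comb n cs" by (simp add: lin_comb_def a)
  then show ?case using Cons A L a by auto
qed

lemma lin_comb_append:
  assumes "set (map snd cs) \<subseteq> carrier_mat n n" "set (map snd ds) \<subseteq> carrier_mat n n"
  shows "lin_comb n (cs @ ds) = lin_comb n cs + lin_comb n ds"
proof (rule eq_matI)
  have c: "lin_comb n (cs @ ds) \<in> carrier_mat n n" "lin_comb n cs \<in> carrier_mat n n"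
    "lin_comb n ds \<in> carrier_mat n n"
    using assms by (auto intro!: lin_comb_carrier simp: image_subset_iff)
  then show "dim_row (lin_comb n (cs @ ds)) = dim_row (lin_comb n cs + lin_comb n ds)"
    "dim_col (lin_comb n (cs @ ds)) = dim_col (lin_comb n cs + lin_comb n ds)" by auto
  fix i j assume "i < dim_row (lin_comb n cs + lin_comb n ds)" "j < dim_col (lin_comb n cs + lin_comb n ds)"
  then have ij: "i < n" "j < n" using c by auto
  show "lin_comb n (cs @ ds) $$ (i, j) = (lin_comb n cs + lin_comb n ds) $$ (i, j)"
    using c ij assms by (simp add: index_lin_comb)
qed

lemma lin_comb_smult:
  assumes "set (map snd cs) \<subseteq> carrier_mat n n"
  shows "lin_comb n (map (\<lambda>(d, A). (c * d, A)) cs) = c \<cdot>\<^sub>m lin_comb n cs"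
proof (rule eq_matI)
  let ?cs' = "map (\<lambda>(d, A). (c * d, A)) cs"
  have s: "set (map snd ?cs') \<subseteq> carrier_mat n n" using assms by auto
  have c: "lin_comb n ?cs' \<in> carrier_mat n n" "lin_comb n cs \<in> carrier_mat n n"
    using lin_comb_carrier[OF s] lin_comb_carrier[OF assms] by auto
  then show "dim_row (lin_comb n ?cs') = dim_row (c \<cdot>\<^sub>m lin_comb n cs)"
    "dim_col (lin_comb n ?cs') = dim_col (c \<cdot>\<^sub>m lin_comb n cs)" by auto
  fix i j assume "i < dim_row (c \<cdot>\<^sub>m lin_comb n cs)" "j < dim_col (c \<cdot>\<^sub>m lin_comb n cs)"
  then have ij: "i < n" "j < n" using c by auto
  have "lin_comb n ?cs' $$ (i, j) = (\<Sum>(d, A)\<leftarrow>?cs'. d * A $$ (i, j))"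
    using index_lin_comb[OF s ij] .
  also have "\<dots> = (\<Sum>(d, A)\<leftarrow>cs. c * (d * A $$ (i, j)))"
    by (induction cs) (auto simp: mult.assoc)
  also have "\<dots> = c * (\<Sum>(d, A)\<leftarrow>cs. d * A $$ (i, j))"
    by (induction cs) (auto simp: distrib_left)
  finally show "lin_comb n ?cs' $$ (i, j) = (c \<cdot>\<^sub>m lin_comb n cs) $$ (i, j)"
    using c ij assms by (simp add: index_lin_comb)
qed

lemma mat_span_carrier: "T \<subseteq> carrier_mat n n \<Longrightarrow> mat_span n T \<subseteq> carrier_mat n n"
  unfolding mat_span_def using lin_comb_carrier by blast

lemma zero_in_mat_span: "0\<^sub>m n n \<in> mat_span n T"
  unfolding mat_span_def by (rule CollectI, rule exI[of _ "[]"]) (simp add: lin_comb_def)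

lemma mat_span_base:
  assumes "A \<in> T" "T \<subseteq> carrier_mat n n"
  shows "A \<in> mat_span n T"
proof -
  have A: "A \<in> carrier_mat n n" using assms by auto
  have "lin_comb n [(1, A)] = A" using A by (auto simp: lin_comb_def)
  then show ?thesis unfolding mat_span_def using assms(1)
    by (intro CollectI exI[of _ "[(1, A)]"]) auto
qed

lemma mat_span_add:
  assumes "X \<in> mat_span n T" "Y \<in> mat_span n T" "T \<subseteq> carrier_mat n n"
  shows "X + Y \<in> mat_span n T"
proof -
  obtain cs ds where X: "X = lin_comb n cs" "set (map snd cs) \<subseteq> T"
    and Y: "Y = lin_comb n ds" "set (map snd ds) \<subseteq> T"
    using assms unfolding mat_span_def by blast
  have "X + Y = lin_comb n (cs @ ds)" using X Y assms(3) by (simp add: lin_comb_append)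
  then show ?thesis unfolding mat_span_def using X Y by (intro CollectI exI[of _ "cs @ ds"]) auto
qed

lemma mat_span_smult:
  assumes "X \<in> mat_span n T" "T \<subseteq> carrier_mat n n"
  shows "c \<cdot>\<^sub>m X \<in> mat_span n T"
proof -
  obtain cs where X: "X = lin_comb n cs" "set (map snd cs) \<subseteq> T"
    using assms unfolding mat_span_def by blast
  have "c \<cdot>\<^sub>m X = lin_comb n (map (\<lambda>(d, A). (c * d, A)) cs)"
    using X assms(2) by (simp add: lin_comb_smult)
  moreover have "set (map snd (map (\<lambda>(d, A). (c * d, A)) cs)) \<subseteq> T" using X by auto
  ultimately show ?thesis unfolding mat_span_def by blast
qed

lemma mat_span_diff:
  assumes "X \<in> mat_span n T" "Y \<in> mat_span n T" "T \<subseteq> carrier_mat n n"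
  shows "X - Y \<in> mat_span n T"
proof -
  have "X \<in> carrier_mat n n" "Y \<in> carrier_mat n n" using assms mat_span_carrier by blast+
  then have "X - Y = X + (-1) \<cdot>\<^sub>m Y" by (intro eq_matI) auto
  then show ?thesis using assms mat_span_add mat_span_smult by metis
qed

lemma lin_comb_in_mat_span:
  assumes "set (map snd cs) \<subseteq> mat_span n T" "T \<subseteq> carrier_mat n n"
  shows "lin_comb n cs \<in> mat_span n T"
  using assms(1)
proof (induction cs)
  case Nil then show ?case using zero_in_mat_span by (simp add: lin_comb_def)
next
  case (Cons a cs)
  obtain c A where a: "a = (c, A)" by fastforce
  have "lin_comb n (a # cs) = c \<cdot>\<^sub>m A + lin_comb n cs" by (simp add: lin_comb_def a)
  then show ?case using Cons a mat_span_add[OF mat_span_smult[of A n T c]] assms(2) by auto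
qed

lemma linear_functional_vanishes_on_mat_span:
  assumes T: "T \<subseteq> carrier_mat n n" and f0: "\<forall>A\<in>T. f A = 0"
    and lin: "\<And>c A B. A \<in> carrier_mat n n \<Longrightarrow> B \<in> carrier_mat n n \<Longrightarrow> f (c \<cdot>\<^sub>m A + B) = c * f A + f B"
    and z: "f (0\<^sub>m n n) = 0"
    and X: "X \<in> mat_span n T"
  shows "f X = 0"
proof -
  obtain cs where X: "X = lin_comb n cs" "set (map snd cs) \<subseteq> T"
    using X unfolding mat_span_def by blast
  have "f (lin_comb n cs) = 0" using X(2)
  proof (induction cs)
    case Nil then show ?case using z by (simp add: lin_comb_def)
  next
    case (Cons a cs)
    obtain c A where a: "a = (c, A)" by fastforce
    have "lin_comb n (a # cs) = c \<cdot>\<^sub>m A + lin_comb n cs" by (simp add: lin_comb_def a)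
    moreover have "lin_comb n cs \<in> carrier_mat n n" using Cons T by (intro lin_comb_carrier) auto
    ultimately show ?case using Cons a T f0 lin by auto
  qed
  then show ?thesis using X by simp
qed

lemma unit_mat_carrier [simp]: "unit_mat n i j \<in> carrier_mat n n"
  by (simp add: unit_mat_def)

lemma index_unit_mat:
  "a < n \<Longrightarrow> b < n \<Longrightarrow> unit_mat n i j $$ (a, b) = (if a = i \<and> b = j then 1 else 0)"
  by (simp add: unit_mat_def)

lemma dim_unit_mat [simp]: "dim_row (unit_mat n i j) = n" "dim_col (unit_mat n i j) = n"
  by (simp_all add: unit_mat_def)

lemma mat_diff_diff_cancel:
  "A \<in> carrier_mat n n \<Longrightarrow> B \<in> carrier_mat n n \<Longrightarrow> A - (A - B) = (B :: 'a::ab_group_add mat)"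
  by (intro eq_matI) auto

lemma mat_diff_add_diff:
  "A \<in> carrier_mat n n \<Longrightarrow> B \<in> carrier_mat n n \<Longrightarrow> C \<in> carrier_mat n n \<Longrightarrow>
    (A - B) + (B - C) = (A - C :: 'a::ab_group_add mat)"
  by (intro eq_matI) auto

lemma carrier_mat_subset_mat_span_unit_mats:
  fixes T :: "'a::comm_ring_1 mat set"
  assumes T: "T \<subseteq> carrier_mat n n"
    and units: "\<And>a b. a < n \<Longrightarrow> b < n \<Longrightarrow> unit_mat n a b \<in> mat_span n T"
  shows "carrier_mat n n \<subseteq> mat_span n T"
proof
  fix X :: "'a mat" assume X: "X \<in> carrier_mat n n"
  define L where "L = List.product [0..<n] [0..<n]"
  define cs where "cs = map (\<lambda>(a, b). (X $$ (a, b), unit_mat n a b :: 'a mat)) L"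
  have cs_sub: "set (map snd cs) \<subseteq> mat_span n T" unfolding cs_def L_def using units by auto
  have cs_car: "set (map snd cs) \<subseteq> carrier_mat n n" unfolding cs_def by auto
  have "X = lin_comb n cs"
  proof (rule eq_matI)
    show "dim_row X = dim_row (lin_comb n cs)" "dim_col X = dim_col (lin_comb n cs)"
      using X lin_comb_carrier[OF cs_car] by auto
    fix i j assume "i < dim_row (lin_comb n cs)" "j < dim_col (lin_comb n cs)"
    then have ij: "i < n" "j < n" using lin_comb_carrier[OF cs_car] by auto
    have "lin_comb n cs $$ (i, j) = (\<Sum>(c, A)\<leftarrow>cs. c * A $$ (i, j))"
      by (rule index_lin_comb[OF cs_car ij])
    also have "\<dots> = sum_list (map (\<lambda>(a, b). X $$ (a, b) * unit_mat n a b $$ (i, j)) L)"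
      unfolding cs_def by (induction L) auto
    also have "\<dots> = sum (\<lambda>(a, b). X $$ (a, b) * unit_mat n a b $$ (i, j)) (set L)"
      unfolding L_def by (rule sum_list_distinct_conv_sum_set) (simp add: distinct_product)
    also have "\<dots> = sum (\<lambda>x. if x = (i, j) then X $$ (i, j) else 0) ({0..<n} \<times> {0..<n})"
      unfolding L_def using ij by (intro sum.cong) (auto simp: index_unit_mat split: if_splits)
    also have "\<dots> = X $$ (i, j)" using ij by (simp add: sum.delta)
    finally show "X $$ (i, j) = lin_comb n cs $$ (i, j)" by simp
  qed
  then show "X \<in> mat_span n T" using lin_comb_in_mat_span[OF cs_sub T] by simp
qed

lemma diagonal_unit_mats_in_mat_span:
  fixes T :: "'a::comm_ring_1 mat set"
  assumes T: "T \<subseteq> carrier_mat n n" and E00: "unit_mat n 0 0 \<in> mat_span n T"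
    and diffs: "\<And>r. Suc r < n \<Longrightarrow> unit_mat n r r - unit_mat n (Suc r) (Suc r) \<in> mat_span n T"
    and q: "q < n"
  shows "unit_mat n q q \<in> mat_span n T"
  using q
proof (induction q)
  case 0 then show ?case using E00 by simp
next
  case (Suc r)
  have "unit_mat n r r \<in> mat_span n T" using Suc by simp
  moreover have "unit_mat n r r - unit_mat n (Suc r) (Suc r) \<in> mat_span n T" using Suc diffs by simp
  ultimately have "unit_mat n r r - (unit_mat n r r - unit_mat n (Suc r) (Suc r)) \<in> mat_span n T"
    by (rule mat_span_diff[OF _ _ T])
  then show ?case by (simp add: mat_diff_diff_cancel[OF unit_mat_carrier unit_mat_carrier])
qed

lemma one_plus_lin_comb_unit_mat_diffs:
  "1\<^sub>m n + lin_comb n (map (\<lambda>r. (1, unit_mat n 0 0 - unit_mat n r r)) [0..<n])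
    = of_nat n \<cdot>\<^sub>m (unit_mat n 0 0 :: 'a::comm_ring_1 mat)"
  (is "1\<^sub>m n + lin_comb n ?cs = _")
proof -
  have cs_car: "set (map snd ?cs) \<subseteq> carrier_mat n n" by auto
  show ?thesis
  proof (rule eq_matI)
    show "dim_row (1\<^sub>m n + lin_comb n ?cs) = dim_row (of_nat n \<cdot>\<^sub>m (unit_mat n 0 0 :: 'a mat))"
      "dim_col (1\<^sub>m n + lin_comb n ?cs) = dim_col (of_nat n \<cdot>\<^sub>m (unit_mat n 0 0 :: 'a mat))"
      using lin_comb_carrier[OF cs_car] by auto
    fix i j
    assume "i < dim_row (of_nat n \<cdot>\<^sub>m (unit_mat n 0 0 :: 'a mat))"
      "j < dim_col (of_nat n \<cdot>\<^sub>m (unit_mat n 0 0 :: 'a mat))"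
    then have ij: "i < n" "j < n" by auto
    have "lin_comb n ?cs $$ (i, j) = (\<Sum>(c, A)\<leftarrow>?cs. c * A $$ (i, j))"
      by (rule index_lin_comb[OF cs_car ij])
    also have "\<dots> = (\<Sum>r\<leftarrow>[0..<n]. (if i = 0 \<and> j = 0 then 1 else 0) - (if i = r \<and> j = r then 1 else 0))"
      using ij by (simp add: comp_def index_unit_mat)
    also have "\<dots> = (\<Sum>r\<in>{0..<n}. (if i = 0 \<and> j = 0 then 1 else 0) - (if i = r \<and> j = r then 1 else 0))"
      by (simp add: sum_list_distinct_conv_sum_set)
    also have "\<dots> = of_nat n * (if i = 0 \<and> j = 0 then 1 else 0) - (if i = j then 1 else 0)"
    proof -
      have "(\<Sum>r\<in>{0..<n}. if i = r \<and> j = r then (1::'a) else 0) = (if i = j then 1 else 0)"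
        using ij by (cases "i = j") (auto intro!: sum.neutral)
      then show ?thesis by (simp add: sum_subtractf)
    qed
    finally show "(1\<^sub>m n + lin_comb n ?cs) $$ (i, j) = (of_nat n \<cdot>\<^sub>m (unit_mat n 0 0 :: 'a mat)) $$ (i, j)"
      using ij lin_comb_carrier[OF cs_car] by (simp add: index_unit_mat)
  qed
qed

text \<open>The differences E(0,0) - E(r,r) telescope.\<close>

lemma unit_mat_0_0_in_mat_span_of_one:
  fixes T :: "'a::field_char_0 mat set"
  assumes T: "T \<subseteq> carrier_mat n n" and n: "0 < n" and one: "1\<^sub>m n \<in> mat_span n T"
    and diffs: "\<And>r. Suc r < n \<Longrightarrow> unit_mat n r r - unit_mat n (Suc r) (Suc r) \<in> mat_span n T"
  shows "unit_mat n 0 0 \<in> mat_span n T"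
proof -
  let ?cs = "map (\<lambda>r. (1::'a, unit_mat n 0 0 - unit_mat n r r)) [0..<n]"
  have telescope: "unit_mat n 0 0 - unit_mat n r r \<in> mat_span n T" if "r < n" for r
    using that
  proof (induction r)
    case 0 then show ?case using zero_in_mat_span by (simp add: minus_r_inv_mat[OF unit_mat_carrier])
  next
    case (Suc r)
    have "(unit_mat n 0 0 - unit_mat n r r) + (unit_mat n r r - unit_mat n (Suc r) (Suc r)) \<in> mat_span n T"
      using Suc diffs by (intro mat_span_add[OF _ _ T]) auto
    then show ?case by (simp add: mat_diff_add_diff[OF unit_mat_carrier unit_mat_carrier unit_mat_carrier])
  qed
  have "set (map snd ?cs) \<subseteq> mat_span n T" using telescope by auto
  then have "1\<^sub>m n + lin_comb n ?cs \<in> mat_span n T"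
    by (rule mat_span_add[OF one lin_comb_in_mat_span[OF _ T] T])
  then have "(1 / of_nat n) \<cdot>\<^sub>m (of_nat n \<cdot>\<^sub>m unit_mat n 0 0) \<in> mat_span n T"
    unfolding one_plus_lin_comb_unit_mat_diffs by (rule mat_span_smult[OF _ T])
  moreover have "(1 / of_nat n) \<cdot>\<^sub>m (of_nat n \<cdot>\<^sub>m unit_mat n 0 0) = (unit_mat n 0 0 :: 'a mat)"
    using n by (intro eq_matI) auto
  ultimately show ?thesis by simp
qed

lemma word_prod_Nil: "word_prod n [] = 1\<^sub>m n"
  by (simp add: word_prod_def)

lemma word_prod_Cons: "word_prod n (x # ws) = x * word_prod n ws"
  by (simp add: word_prod_def)

lemma word_prod_carrier: "set ws \<subseteq> carrier_mat n n \<Longrightarrow> word_prod n ws \<in> carrier_mat n n"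
  by (induction ws) (auto simp: word_prod_def)

lemma word_prod_append:
  assumes "set xs \<subseteq> carrier_mat n n" "set ys \<subseteq> carrier_mat n n"
  shows "word_prod n (xs @ ys) = word_prod n xs * word_prod n ys"
  using assms(1)
proof (induction xs)
  case Nil then show ?case using word_prod_carrier[OF assms(2)] by (simp add: word_prod_Nil)
next
  case (Cons x xs)
  then show ?case using word_prod_carrier[OF assms(2)] word_prod_carrier[of xs n]
    by (simp add: word_prod_Cons assoc_mult_mat[of x n n _ n _ n])
qed

lemma words_carrier: "S \<subseteq> carrier_mat n n \<Longrightarrow> words n S lo hi \<subseteq> carrier_mat n n"
  unfolding words_def using word_prod_carrier[of _ n] by blast

lemma word_in_mat_span_words:
  assumes "S \<subseteq> carrier_mat n n" "set ws \<subseteq> S" "lo \<le> length ws" "length ws \<le> hi"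
  shows "word_prod n ws \<in> mat_span n (words n S lo hi)"
  by (rule mat_span_base[OF _ words_carrier[OF assms(1)]]) (use assms in \<open>auto simp: words_def\<close>)

lemma mat_span_words_strict_step:
  fixes f :: "'a::comm_ring_1 mat \<Rightarrow> 'a"
  assumes S: "S \<subseteq> carrier_mat n n"
    and lin: "\<And>c A B. A \<in> carrier_mat n n \<Longrightarrow> B \<in> carrier_mat n n \<Longrightarrow> f (c \<cdot>\<^sub>m A + B) = c * f A + f B"
    and z: "f (0\<^sub>m n n) = 0"
    and van: "\<And>ws. set ws \<subseteq> S \<Longrightarrow> lo \<le> length ws \<Longrightarrow> length ws \<le> k \<Longrightarrow> f (word_prod n ws) = 0"
    and w0: "set wz \<subseteq> S" "lo \<le> length wz" "length wz \<le> Suc k" "f (word_prod n wz) \<noteq> 0"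
  shows "mat_span n (words n S lo k) \<noteq> mat_span n (words n S lo (Suc k))"
proof
  assume eq: "mat_span n (words n S lo k) = mat_span n (words n S lo (Suc k))"
  have m: "word_prod n wz \<in> mat_span n (words n S lo k)"
    using word_in_mat_span_words[OF S w0(1-3)] eq by simp
  have "f (word_prod n wz) = 0"
    by (rule linear_functional_vanishes_on_mat_span[OF words_carrier[OF S] _ lin z m])
      (auto simp: words_def intro: van)
  then show False using w0 by simp
qed

lemma index_mult_sum:
  assumes "A \<in> carrier_mat n n" "Y \<in> carrier_mat n n" "i < n" "j < n"
  shows "(A * Y) $$ (i, j) = (\<Sum>k<n. A $$ (i, k) * Y $$ (k, j))"
  using assms by (simp add: scalar_prod_def lessThan_atLeast0)

lemma mult_carrier_mat_square [simp]:
  "A \<in> carrier_mat n n \<Longrightarrow> B \<in> carrier_mat n n \<Longrightarrow> A * B \<in> carrier_mat n n"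
  by (rule mult_carrier_mat)
definition Bmat_entry :: "nat \<Rightarrow> nat \<Rightarrow> nat \<Rightarrow> complex" where
  "Bmat_entry n i j = (if i = n - 2 \<and> j = 0 then 1 else 0) - (if i = n - 1 \<and> j = 1 then 1 else 0)"

lemma Jblock_carrier [simp]: "Jblock n \<in> carrier_mat n n"
  by (simp add: Jblock_def)

lemma Bmat_carrier [simp]: "Bmat n \<in> carrier_mat n n"
  by (simp add: Bmat_def unit_mat_def minus_carrier_mat)

lemma index_Jblock: "i < n \<Longrightarrow> j < n \<Longrightarrow> Jblock n $$ (i, j) = (if j = Suc i then 1 else 0)"
  by (simp add: Jblock_def)

lemma index_Bmat: "i < n \<Longrightarrow> j < n \<Longrightarrow> Bmat n $$ (i, j) = Bmat_entry n i j"
  by (simp add: Bmat_def unit_mat_def Bmat_entry_def)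

lemma Jblock_neq_Bmat: "3 \<le> n \<Longrightarrow> Jblock n \<noteq> Bmat n"
proof
  assume "3 \<le> n" "Jblock n = Bmat n"
  then have "Jblock n $$ (0, 1) = Bmat n $$ (0, 1)" by simp
  then show False using \<open>3 \<le> n\<close> by (simp add: index_Jblock index_Bmat Bmat_entry_def)
qed

lemma index_Jblock_mult:
  assumes "Y \<in> carrier_mat n n" "i < n" "j < n"
  shows "(Jblock n * Y) $$ (i, j) = (if Suc i < n then Y $$ (Suc i, j) else 0)"
proof -
  have "(Jblock n * Y) $$ (i, j) = (\<Sum>k<n. Jblock n $$ (i, k) * Y $$ (k, j))"
    using assms by (simp add: index_mult_sum)
  also have "\<dots> = (\<Sum>k<n. (if k = Suc i then Y $$ (k, j) else 0))"
    using assms by (intro sum.cong) (auto simp: index_Jblock)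
  also have "\<dots> = (if Suc i < n then Y $$ (Suc i, j) else 0)" by (simp add: sum.delta)
  finally show ?thesis .
qed

lemma index_mult_Jblock:
  assumes "Y \<in> carrier_mat n n" "i < n" "j < n"
  shows "(Y * Jblock n) $$ (i, j) = (if 0 < j then Y $$ (i, j - 1) else 0)"
proof -
  have "(Y * Jblock n) $$ (i, j) = (\<Sum>k<n. Y $$ (i, k) * Jblock n $$ (k, j))"
    using assms by (simp add: index_mult_sum)
  also have "\<dots> = (\<Sum>k<n. (if k = j - 1 \<and> 0 < j then Y $$ (i, k) else 0))"
    using assms by (intro sum.cong) (auto simp: index_Jblock)
  also have "\<dots> = (if 0 < j then Y $$ (i, j - 1) else 0)" using assms(3)
    by (cases "0 < j") (simp_all add: sum.delta)
  finally show ?thesis .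
qed

lemma index_Bmat_mult:
  assumes "Y \<in> carrier_mat n n" "i < n" "j < n" "2 \<le> n"
  shows "(Bmat n * Y) $$ (i, j) =
    (if i = n - 2 then Y $$ (0, j) else 0) - (if i = n - 1 then Y $$ (1, j) else 0)"
proof -
  have "(Bmat n * Y) $$ (i, j) = (\<Sum>k<n. Bmat n $$ (i, k) * Y $$ (k, j))"
    using assms by (simp add: index_mult_sum)
  also have "\<dots> = (\<Sum>k<n. (if i = n - 2 \<and> k = 0 then Y $$ (k, j) else 0)
                         - (if i = n - 1 \<and> k = 1 then Y $$ (k, j) else 0))"
    using assms by (intro sum.cong) (auto simp: index_Bmat Bmat_entry_def)
  also have "\<dots> = (if i = n - 2 then Y $$ (0, j) else 0) - (if i = n - 1 then Y $$ (1, j) else 0)"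
    using assms(4) by (auto simp add: sum_subtractf sum.delta)
  finally show ?thesis .
qed

abbreviation Jpow :: "nat \<Rightarrow> nat \<Rightarrow> complex mat" where
  "Jpow n p \<equiv> word_prod n (replicate p (Jblock n))"

lemma Jpow_carrier [simp]: "Jpow n p \<in> carrier_mat n n"
  by (rule word_prod_carrier) auto

lemma index_Jpow_mult:
  assumes "X \<in> carrier_mat n n" "i < n" "j < n"
  shows "(Jpow n p * X) $$ (i, j) = (if i + p < n then X $$ (i + p, j) else 0)"
  using assms(2)
proof (induction p arbitrary: i)
  case 0 then show ?case using assms by (simp add: word_prod_Nil)
next
  case (Suc p)
  have e: "Jpow n (Suc p) * X = Jblock n * (Jpow n p * X)"
    using assms by (simp add: word_prod_Cons assoc_mult_mat[of _ n n _ n _ n])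
  have C: "Jpow n p * X \<in> carrier_mat n n" using assms by simp
  have "(Jpow n (Suc p) * X) $$ (i, j) = (if Suc i < n then (Jpow n p * X) $$ (Suc i, j) else 0)"
    unfolding e using index_Jblock_mult[OF C Suc.prems assms(3)] .
  also have "\<dots> = (if i + Suc p < n then X $$ (i + Suc p, j) else 0)"
    using Suc.IH[of "Suc i"] by auto
  finally show ?case .
qed

lemma index_mult_Jpow:
  assumes "X \<in> carrier_mat n n" "i < n" "j < n"
  shows "(X * Jpow n q) $$ (i, j) = (if q \<le> j then X $$ (i, j - q) else 0)"
  using assms(1)
proof (induction q arbitrary: X)
  case 0 then show ?case using assms by (simp add: word_prod_Nil)
next
  case (Suc q)
  have "X * Jpow n (Suc q) = (X * Jblock n) * Jpow n q"
    using Suc assms by (simp add: word_prod_Cons assoc_mult_mat[of _ n n _ n _ n])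
  moreover have "X * Jblock n \<in> carrier_mat n n" using Suc by simp
  ultimately show ?case using Suc assms by (auto simp: index_mult_Jblock)
qed

lemma index_Jpow:
  assumes "i < n" "j < n"
  shows "Jpow n p $$ (i, j) = (if i + p = j then 1 else 0)"
proof -
  have "Jpow n p $$ (i, j) = (Jpow n p * 1\<^sub>m n) $$ (i, j)"
    by (simp add: right_mult_one_mat[OF Jpow_carrier])
  also have "\<dots> = (if i + p = j then 1 else 0)" using assms by (simp add: index_Jpow_mult)
  finally show ?thesis .
qed

lemma words_JB_carrier [simp]:
  "set ws \<subseteq> {Jblock n, Bmat n} \<Longrightarrow> word_prod n ws \<in> carrier_mat n n"
  by (rule word_prod_carrier) auto

lemma set_replicate_Jblock_subset [simp]: "set (replicate p (Jblock n)) \<subseteq> {Jblock n, Bmat n}"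
  by auto

lemma index_word_one_B:
  assumes "i < n" "j < n"
  shows "word_prod n (replicate p (Jblock n) @ Bmat n # replicate q (Jblock n)) $$ (i, j)
     = (if i + p < n \<and> q \<le> j then Bmat_entry n (i + p) (j - q) else 0)"
proof -
  have "word_prod n (replicate p (Jblock n) @ Bmat n # replicate q (Jblock n))
      = Jpow n p * (Bmat n * Jpow n q)"
    by (subst word_prod_append) (auto simp: word_prod_Cons)
  moreover have C: "Bmat n * Jpow n q \<in> carrier_mat n n" by simp
  ultimately show ?thesis
    using assms by (simp add: index_Jpow_mult[OF C] index_mult_Jpow index_Bmat)
qed

lemma word_prod_two_B:
  "word_prod n (replicate a (Jblock n) @ Bmat n # replicate c (Jblock n) @ Bmat n # replicate d (Jblock n))
     = Jpow n a * (Bmat n * (Jpow n c * (Bmat n * Jpow n d)))"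
proof -
  have "word_prod n (replicate a (Jblock n) @ Bmat n # replicate c (Jblock n) @ Bmat n # replicate d (Jblock n))
    = Jpow n a * word_prod n (Bmat n # replicate c (Jblock n) @ Bmat n # replicate d (Jblock n))"
    by (rule word_prod_append) auto
  also have "word_prod n (Bmat n # replicate c (Jblock n) @ Bmat n # replicate d (Jblock n))
     = Bmat n * word_prod n (replicate c (Jblock n) @ Bmat n # replicate d (Jblock n))"
    by (simp add: word_prod_Cons)
  also have "word_prod n (replicate c (Jblock n) @ Bmat n # replicate d (Jblock n))
     = Jpow n c * word_prod n (Bmat n # replicate d (Jblock n))"
    by (rule word_prod_append) auto
  finally show ?thesis by (simp add: word_prod_Cons)
qed

lemma index_word_two_B:
  assumes "i < n" "j < n" "2 \<le> n"
  shows "word_prod n (replicate a (Jblock n) @ Bmat n # replicate c (Jblock n) @ Bmat n # replicate d (Jblock n)) $$ (i, j)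
     = (if i + a < n then
          (if i + a = n - 2 then (if c < n then (if d \<le> j then Bmat_entry n c (j - d) else 0) else 0) else 0)
        - (if i + a = n - 1 then (if 1 + c < n then (if d \<le> j then Bmat_entry n (1 + c) (j - d) else 0) else 0) else 0)
        else 0)"
proof -
  have C1: "Bmat n * Jpow n d \<in> carrier_mat n n" by simp
  have C2: "Jpow n c * (Bmat n * Jpow n d) \<in> carrier_mat n n" by simp
  have C3: "Bmat n * (Jpow n c * (Bmat n * Jpow n d)) \<in> carrier_mat n n" by simp
  have e1: "\<And>x. x < n \<Longrightarrow> (Bmat n * Jpow n d) $$ (x, j) = (if d \<le> j then Bmat_entry n x (j - d) else 0)"
    using assms by (simp add: index_mult_Jpow index_Bmat)
  have e2: "\<And>x. x < n \<Longrightarrow> (Jpow n c * (Bmat n * Jpow n d)) $$ (x, j)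
      = (if x + c < n then (if d \<le> j then Bmat_entry n (x + c) (j - d) else 0) else 0)"
    using assms by (simp add: index_Jpow_mult[OF C1] e1)
  have e3: "\<And>x. x < n \<Longrightarrow> (Bmat n * (Jpow n c * (Bmat n * Jpow n d))) $$ (x, j)
     = (if x = n - 2 then (Jpow n c * (Bmat n * Jpow n d)) $$ (0, j) else 0)
     - (if x = n - 1 then (Jpow n c * (Bmat n * Jpow n d)) $$ (1, j) else 0)"
    using assms by (simp add: index_Bmat_mult[OF C2])
  have n01: "0 < n" "1 < n" using assms by auto
  show ?thesis
  proof (cases "i + a < n")
    case True
    then show ?thesis unfolding word_prod_two_B index_Jpow_mult[OF C3 assms(1,2)]
      using True e3[OF True] e2[OF n01(1)] e2[OF n01(2)] by simp
  next
    case False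
    then show ?thesis unfolding word_prod_two_B index_Jpow_mult[OF C3 assms(1,2)] by simp
  qed
qed
definition count_B :: "nat \<Rightarrow> complex mat list \<Rightarrow> nat" where
  "count_B n ws = length (filter (\<lambda>x. x = Bmat n) ws)"

lemma word_entry_nonzero_weight:
  assumes "3 \<le> n" "set ws \<subseteq> {Jblock n, Bmat n}" "i < n" "j < n" "word_prod n ws $$ (i, j) \<noteq> 0"
  shows "int j + int (count_B n ws) * (int n - 1) = int i + int (length ws)"
  using assms(2-5)
proof (induction ws arbitrary: i)
  case Nil then show ?case by (simp add: word_prod_Nil count_B_def split: if_splits)
next
  case (Cons x ws)
  have W: "word_prod n ws \<in> carrier_mat n n" using Cons by simp
  have sw: "set ws \<subseteq> {Jblock n, Bmat n}" using Cons by auto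
  show ?case
  proof (cases "x = Jblock n")
    case True
    then have "(Jblock n * word_prod n ws) $$ (i, j) \<noteq> 0" using Cons by (simp add: word_prod_Cons)
    then have "Suc i < n" "word_prod n ws $$ (Suc i, j) \<noteq> 0"
      using W Cons by (auto simp: index_Jblock_mult split: if_splits)
    then have "int j + int (count_B n ws) * (int n - 1) = int (Suc i) + int (length ws)"
      using Cons sw by blast
    moreover have "count_B n (x # ws) = count_B n ws"
      using True Jblock_neq_Bmat[OF assms(1)] by (simp add: count_B_def)
    ultimately show ?thesis by simp
  next
    case False
    then have xB: "x = Bmat n" using Cons by auto
    then have "(Bmat n * word_prod n ws) $$ (i, j) \<noteq> 0" using Cons by (simp add: word_prod_Cons)
    then have "(i = n - 2 \<and> word_prod n ws $$ (0, j) \<noteq> 0) \<or> (i = n - 1 \<and> word_prod n ws $$ (1, j) \<noteq> 0)"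
      using W Cons assms(1) by (auto simp: index_Bmat_mult split: if_splits)
    moreover have "count_B n (x # ws) = Suc (count_B n ws)" using xB by (simp add: count_B_def)
    moreover have "0 < n" "1 < n" using assms(1) by auto
    moreover note Cons.IH[OF sw, of 0] Cons.IH[OF sw, of 1]
    ultimately show ?thesis using Cons.prems assms(1) by (auto simp: algebra_simps of_nat_diff)
  qed
qed

lemma count_B_0_imp_replicate_Jblock:
  assumes "set ws \<subseteq> {Jblock n, Bmat n}" "count_B n ws = 0"
  shows "ws = replicate (length ws) (Jblock n)"
proof -
  have "\<forall>x\<in>set ws. x = Jblock n" using assms by (auto simp: count_B_def filter_empty_conv)
  then show ?thesis by (simp add: replicate_length_same)
qed

lemma count_B_1_imp_single_B:
  assumes "set ws \<subseteq> {Jblock n, Bmat n}" "count_B n ws = 1"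
  shows "\<exists>p q. ws = replicate p (Jblock n) @ Bmat n # replicate q (Jblock n)"
  using assms
proof (induction ws)
  case Nil then show ?case by (simp add: count_B_def)
next
  case (Cons x ws)
  show ?case
  proof (cases "x = Bmat n")
    case True
    then have "count_B n ws = 0" using Cons by (simp add: count_B_def)
    then have "ws = replicate (length ws) (Jblock n)" using Cons by (intro count_B_0_imp_replicate_Jblock) auto
    then show ?thesis using True by (intro exI[of _ 0] exI[of _ "length ws"]) simp
  next
    case False
    then have xJ: "x = Jblock n" using Cons by auto
    then have "count_B n ws = 1" using Cons False by (simp add: count_B_def)
    then obtain p q where "ws = replicate p (Jblock n) @ Bmat n # replicate q (Jblock n)"
      using Cons by auto
    then show ?thesis using xJ by (intro exI[of _ "Suc p"] exI[of _ q]) simp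
  qed
qed
abbreviation span_JB :: "nat \<Rightarrow> nat \<Rightarrow> nat \<Rightarrow> complex mat set" where
  "span_JB n lo hi \<equiv> mat_span n (words n {Jblock n, Bmat n} lo hi)"

lemma span_JB_strict_step_below_n:
  assumes n: "3 \<le> n" and lo: "lo \<le> 1" and k: "Suc k < n"
  shows "span_JB n lo k \<noteq> span_JB n lo (Suc k)"
proof (rule mat_span_words_strict_step[where f = "\<lambda>X. X $$ (0, Suc k)" and wz = "replicate (Suc k) (Jblock n)"])
  fix ws assume ws: "set ws \<subseteq> {Jblock n, Bmat n}" "lo \<le> length ws" "length ws \<le> k"
  show "word_prod n ws $$ (0, Suc k) = 0"
  proof (rule ccontr)
    assume "word_prod n ws $$ (0, Suc k) \<noteq> 0"
    then have "int (Suc k) + int (count_B n ws) * (int n - 1) = int 0 + int (length ws)"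
      using word_entry_nonzero_weight[OF n ws(1)] k by blast
    moreover have "int (count_B n ws) * (int n - 1) \<ge> 0" using n by simp
    ultimately show False using ws(3) by linarith
  qed
next
  show "Jpow n (Suc k) $$ (0, Suc k) \<noteq> 0" using k index_Jpow[of 0 n "Suc k" "Suc k"] by simp
qed (use k lo in auto)

text \<open>On words of length at most n - 2 + m the weight forces a nonzero (0, m) or (1, m + 1) entry
  to come from J^m, where both entries are 1; the word J^(n-2) B J^m of length n - 1 + m has
  them equal to 1 and 0.\<close>

lemma word_JB_entries_on_superdiagonal_eq:
  assumes n: "3 \<le> n" and m: "m \<le> n - 2"
    and ws: "set ws \<subseteq> {Jblock n, Bmat n}" "length ws \<le> n - 2 + m"
  shows "word_prod n ws $$ (0, m) = word_prod n ws $$ (1, Suc m)"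
proof (cases "word_prod n ws $$ (0, m) = 0 \<and> word_prod n ws $$ (1, Suc m) = 0")
  case False
  then have "int m + int (count_B n ws) * (int n - 1) = int 0 + int (length ws)
    \<or> int (Suc m) + int (count_B n ws) * (int n - 1) = int 1 + int (length ws)"
    using word_entry_nonzero_weight[OF n ws(1), of 0 m] word_entry_nonzero_weight[OF n ws(1), of 1 "Suc m"] n m
    by force
  then have e: "int m + int (count_B n ws) * (int n - 1) = int (length ws)" by auto
  have "count_B n ws = 0"
  proof (rule ccontr)
    assume "count_B n ws \<noteq> 0"
    then have "int (count_B n ws) * (int n - 1) \<ge> int n - 1" using n by simp
    then show False using e ws(2) n by linarith
  qed
  then have "ws = replicate m (Jblock n)"
    using e count_B_0_imp_replicate_Jblock[OF ws(1)] by auto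
  moreover have "m < n" "Suc m < n" using n m by auto
  ultimately show ?thesis using index_Jpow[of 0 n m m] index_Jpow[of 1 n "Suc m" m] by simp
qed simp

lemma span_JB_strict_step_above_n:
  assumes n: "3 \<le> n" and lo: "lo \<le> 1" and m: "1 \<le> m" "m \<le> n - 2" and k: "Suc k = n - 1 + m"
  shows "span_JB n lo k \<noteq> span_JB n lo (Suc k)"
proof (rule mat_span_words_strict_step[where f = "\<lambda>X. X $$ (0, m) - X $$ (1, Suc m)"
      and wz = "replicate (n - 2) (Jblock n) @ Bmat n # replicate m (Jblock n)"])
  fix x :: complex and A B :: "complex mat" assume "A \<in> carrier_mat n n" "B \<in> carrier_mat n n"
  then show "(x \<cdot>\<^sub>m A + B) $$ (0, m) - (x \<cdot>\<^sub>m A + B) $$ (1, Suc m)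
      = x * (A $$ (0, m) - A $$ (1, Suc m)) + (B $$ (0, m) - B $$ (1, Suc m))"
    using n m by (simp add: right_diff_distrib)
next
  show "(0\<^sub>m n n :: complex mat) $$ (0, m) - (0\<^sub>m n n :: complex mat) $$ (1, Suc m) = 0"
    using n m by simp
next
  fix ws assume ws: "set ws \<subseteq> {Jblock n, Bmat n}" "lo \<le> length ws" "length ws \<le> k"
  have "length ws \<le> n - 2 + m" using ws(3) k n by linarith
  then show "word_prod n ws $$ (0, m) - word_prod n ws $$ (1, Suc m) = 0"
    using word_JB_entries_on_superdiagonal_eq[OF n m(2) ws(1)] by simp
next
  show "word_prod n (replicate (n - 2) (Jblock n) @ Bmat n # replicate m (Jblock n)) $$ (0, m) -
    word_prod n (replicate (n - 2) (Jblock n) @ Bmat n # replicate m (Jblock n)) $$ (1, Suc m) \<noteq> 0"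
    using n m by (simp add: index_word_one_B Bmat_entry_def)
qed (use k lo n m in auto)

lemma span_JB_strict_step:
  assumes n: "3 \<le> n" and lo: "lo \<le> 1" and y: "Suc y \<le> 2 * n - 3"
  shows "span_JB n lo y \<noteq> span_JB n lo (Suc y)"
proof (cases "Suc y < n")
  case True then show ?thesis using span_JB_strict_step_below_n[OF n lo] by simp
next
  case False
  define m where "m = Suc y - (n - 1)"
  have "1 \<le> m" "m \<le> n - 2" "Suc y = n - 1 + m" using False y n unfolding m_def by auto
  then show ?thesis using span_JB_strict_step_above_n[OF n lo] by blast
qed

text \<open>A word of length at most 2n - 3 with a nonzero diagonal entry has length a multiple of n - 1,
  hence is J^p B J^q with p + q = n - 2, whose diagonal is E(q,q) - E(q+1,q+1).\<close>

lemma diagonal_sum_word_JB_eq_0: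
  assumes n: "3 \<le> n" and ws: "set ws \<subseteq> {Jblock n, Bmat n}" "1 \<le> length ws" "length ws \<le> 2 * n - 3"
  shows "(\<Sum>i<n. word_prod n ws $$ (i, i)) = 0"
proof (cases "\<forall>i<n. word_prod n ws $$ (i, i) = 0")
  case False
  then obtain i where i: "i < n" "word_prod n ws $$ (i, i) \<noteq> 0" by auto
  have e: "int (count_B n ws) * (int n - 1) = int (length ws)"
    using word_entry_nonzero_weight[OF n ws(1) i(1) i(1) i(2)] by simp
  have "count_B n ws \<noteq> 0"
  proof
    assume "count_B n ws = 0"
    then show False using e ws(2) by simp
  qed
  moreover have "count_B n ws < 2"
  proof (rule ccontr)
    assume "\<not> count_B n ws < 2"
    then have "int (count_B n ws) * (int n - 1) \<ge> 2 * (int n - 1)" using n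
      by (intro mult_right_mono) auto
    moreover have "int (length ws) \<le> 2 * int n - 3" using ws(3) n by linarith
    ultimately show False using e by (smt (verit))
  qed
  ultimately have c1: "count_B n ws = 1" by simp
  then have len: "length ws = n - 1" using e n by (simp add: of_nat_diff)
  obtain p q where pq: "ws = replicate p (Jblock n) @ Bmat n # replicate q (Jblock n)"
    using count_B_1_imp_single_B[OF ws(1) c1] by blast
  have pq2: "p + q = n - 2" using len pq by simp
  have "word_prod n ws $$ (i, i) = (if i = q then 1 else 0) - (if i = Suc q then 1 else 0)"
    if "i < n" for i
    unfolding pq using that pq2 n by (auto simp: index_word_one_B Bmat_entry_def)
  then have "(\<Sum>i<n. word_prod n ws $$ (i, i)) = (\<Sum>i<n. (if i = q then 1 else 0) - (if i = Suc q then 1 else 0))"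
    by (intro sum.cong) auto
  also have "\<dots> = 0" using pq2 n by (simp add: sum_subtractf)
  finally show ?thesis .
qed simp

lemma diagonal_sum_word_BJBJ:
  assumes n: "3 \<le> n"
  shows "(\<Sum>i<n. word_prod n (Bmat n # replicate (n - 2) (Jblock n) @ Bmat n # replicate (n - 2) (Jblock n)) $$ (i, i)) = 2"
    (is "(\<Sum>i<n. word_prod n ?w $$ (i, i)) = 2")
proof -
  have d: "word_prod n ?w $$ (i, i) = (if i = n - 2 then 1 else 0) + (if i = n - 1 then 1 else 0)"
    if i: "i < n" for i
  proof -
    have "word_prod n ?w $$ (i, i)
      = (if i = n - 2 then Bmat_entry n (n - 2) (i - (n - 2)) else 0)
      - (if i = n - 1 then Bmat_entry n (n - 1) (i - (n - 2)) else 0)"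
      using index_word_two_B[of i n i 0 "n - 2" "n - 2"] i n by (auto simp: Suc_diff_Suc numeral_2_eq_2)
    then show ?thesis using n by (auto simp: Bmat_entry_def)
  qed
  have "(\<Sum>i<n. word_prod n ?w $$ (i, i))
     = (\<Sum>i<n. (if i = n - 2 then 1 else 0) + (if i = n - 1 then (1::complex) else 0))"
    by (rule sum.cong) (auto simp: d)
  also have "\<dots> = 2" using n by (simp add: sum.distrib)
  finally show ?thesis .
qed

lemma nonunital_span_JB_strict_step_top:
  assumes n: "3 \<le> n"
  shows "span_JB n 1 (2 * n - 3) \<noteq> span_JB n 1 (Suc (2 * n - 3))"
proof (rule mat_span_words_strict_step[where f = "\<lambda>X. \<Sum>i<n. X $$ (i, i)"
      and wz = "Bmat n # replicate (n - 2) (Jblock n) @ Bmat n # replicate (n - 2) (Jblock n)"])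
  fix x :: complex and A B :: "complex mat" assume "A \<in> carrier_mat n n" "B \<in> carrier_mat n n"
  then show "(\<Sum>i<n. (x \<cdot>\<^sub>m A + B) $$ (i, i)) = x * (\<Sum>i<n. A $$ (i, i)) + (\<Sum>i<n. B $$ (i, i))"
    by (simp add: sum.distrib sum_distrib_left)
next
  show "(\<Sum>i<n. (0\<^sub>m n n :: complex mat) $$ (i, i)) = 0" by simp
next
  fix ws assume "set ws \<subseteq> {Jblock n, Bmat n}" "1 \<le> length ws" "length ws \<le> 2 * n - 3"
  then show "(\<Sum>i<n. word_prod n ws $$ (i, i)) = 0" by (rule diagonal_sum_word_JB_eq_0[OF n])
next
  show "(\<Sum>i<n. word_prod n (Bmat n # replicate (n - 2) (Jblock n) @ Bmat n # replicate (n - 2) (Jblock n)) $$ (i, i)) \<noteq> 0"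
    using diagonal_sum_word_BJBJ[OF n] by simp
qed (use n in auto)
lemma dim_word_prod_JB [simp]:
  assumes "set ws \<subseteq> {Jblock n, Bmat n}"
  shows "dim_row (word_prod n ws) = n" "dim_col (word_prod n ws) = n"
  using words_JB_carrier[OF assms] by auto

lemma lower_unit_mat_eq_word:
  assumes n: "3 \<le> n" and ij: "j0 < i0" "i0 < n"
  shows "unit_mat n i0 j0 = (-1) \<cdot>\<^sub>m word_prod n
    (replicate (n - 1 - i0) (Jblock n) @ Bmat n # replicate (n - 3) (Jblock n) @ Bmat n # replicate j0 (Jblock n))"
    (is "_ = _ \<cdot>\<^sub>m word_prod n ?w")
proof (rule eq_matI)
  fix i j assume "i < dim_row ((-1) \<cdot>\<^sub>m word_prod n ?w)" "j < dim_col ((-1) \<cdot>\<^sub>m word_prod n ?w)"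
  then have "i < n" "j < n" by auto
  then show "unit_mat n i0 j0 $$ (i, j) = ((-1) \<cdot>\<^sub>m word_prod n ?w) $$ (i, j)"
    using n ij by (simp add: index_word_two_B index_unit_mat Bmat_entry_def) arith
qed auto

lemma first_row_unit_mat_eq_word:
  assumes n: "3 \<le> n" and d: "1 \<le> d" "d < n"
  shows "unit_mat n 0 d = (-1) \<cdot>\<^sub>m word_prod n (replicate (n - 1) (Jblock n) @ Bmat n # replicate (d - 1) (Jblock n))"
    (is "_ = _ \<cdot>\<^sub>m word_prod n ?w")
proof (rule eq_matI)
  fix i j assume "i < dim_row ((-1) \<cdot>\<^sub>m word_prod n ?w)" "j < dim_col ((-1) \<cdot>\<^sub>m word_prod n ?w)"
  then have "i < n" "j < n" by auto
  then show "unit_mat n 0 d $$ (i, j) = ((-1) \<cdot>\<^sub>m word_prod n ?w) $$ (i, j)"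
    using n d by (simp add: index_word_one_B index_unit_mat Bmat_entry_def) arith
qed auto

lemma corner_unit_mat_eq_Jpow:
  assumes n: "3 \<le> n"
  shows "unit_mat n 0 (n - 1) = Jpow n (n - 1)"
proof (rule eq_matI)
  fix i j assume "i < dim_row (Jpow n (n - 1))" "j < dim_col (Jpow n (n - 1))"
  then have "i < n" "j < n" by auto
  then show "unit_mat n 0 (n - 1) $$ (i, j) = Jpow n (n - 1) $$ (i, j)"
    using n by (simp add: index_Jpow index_unit_mat) arith
qed auto

lemma unit_mat_diff_eq_word:
  assumes n: "3 \<le> n" and rd: "r + d + 1 < n"
  shows "unit_mat n r (r + d) - unit_mat n (r + 1) (r + 1 + d)
    = word_prod n (replicate (n - 2 - r) (Jblock n) @ Bmat n # replicate (r + d) (Jblock n))"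
    (is "_ = word_prod n ?w")
proof (rule eq_matI)
  fix i j assume "i < dim_row (word_prod n ?w)" "j < dim_col (word_prod n ?w)"
  then have "i < n" "j < n" by auto
  then show "(unit_mat n r (r + d) - unit_mat n (r + 1) (r + 1 + d)) $$ (i, j) = word_prod n ?w $$ (i, j)"
    using n rd by (simp add: index_word_one_B index_unit_mat Bmat_entry_def) arith
qed auto

lemma diagonal_unit_mat_pair_eq_word:
  assumes n: "3 \<le> n" and q: "q + 1 < n"
  shows "unit_mat n q q + unit_mat n (q + 1) (q + 1) = word_prod n
    (replicate (n - 2 - q) (Jblock n) @ Bmat n # replicate (n - 2) (Jblock n) @ Bmat n # replicate q (Jblock n))"
    (is "_ = word_prod n ?w")
proof (rule eq_matI)
  fix i j assume "i < dim_row (word_prod n ?w)" "j < dim_col (word_prod n ?w)"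
  then have "i < n" "j < n" by auto
  then show "(unit_mat n q q + unit_mat n (q + 1) (q + 1)) $$ (i, j) = word_prod n ?w $$ (i, j)"
    using n q by (simp add: index_word_two_B index_unit_mat Bmat_entry_def) arith
qed auto

lemma words_JB_subset_carrier: "words n {Jblock n, Bmat n} lo hi \<subseteq> carrier_mat n n"
  by (rule words_carrier) simp

context
  fixes n lo hi :: nat
  assumes n: "3 \<le> n" and lo: "lo \<le> 1" and hi: "2 * n - 3 \<le> hi"
begin

lemma lower_unit_mat_in_span_JB:
  assumes "j0 < i0" "i0 < n"
  shows "unit_mat n i0 j0 \<in> span_JB n lo hi"
proof -
  have "word_prod n (replicate (n - 1 - i0) (Jblock n) @ Bmat n # replicate (n - 3) (Jblock n)
      @ Bmat n # replicate j0 (Jblock n)) \<in> span_JB n lo hi"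
    using assms n lo hi by (intro word_in_mat_span_words) auto
  then show ?thesis
    unfolding lower_unit_mat_eq_word[OF n assms] by (rule mat_span_smult[OF _ words_JB_subset_carrier])
qed

lemma unit_mat_diff_in_span_JB:
  assumes "r + d + 1 < n"
  shows "unit_mat n r (r + d) - unit_mat n (r + 1) (r + 1 + d) \<in> span_JB n lo hi"
proof -
  have "word_prod n (replicate (n - 2 - r) (Jblock n) @ Bmat n # replicate (r + d) (Jblock n))
      \<in> span_JB n lo hi"
    using assms n lo hi by (intro word_in_mat_span_words) auto
  then show ?thesis unfolding unit_mat_diff_eq_word[OF n assms] .
qed

text \<open>E(0, d) comes from a word for d \<le> n - 2 and is J^(n-1) for d = n - 1; walking down the
  d-th superdiagonal uses the differences E(r, r+d) - E(r+1, r+1+d).\<close>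

lemma upper_unit_mat_in_span_JB:
  assumes "1 \<le> d" "r + d < n"
  shows "unit_mat n r (r + d) \<in> span_JB n lo hi"
proof (cases "d = n - 1")
  case True
  then have r: "r = 0" using assms by auto
  have "Jpow n (n - 1) \<in> span_JB n lo hi" using n lo hi by (intro word_in_mat_span_words) auto
  then show ?thesis using corner_unit_mat_eq_Jpow[OF n] True r by simp
next
  case False
  then have d2: "d \<le> n - 2" using assms by auto
  have dn: "d < n" using assms by simp
  show ?thesis using assms(2)
  proof (induction r)
    case 0
    have "word_prod n (replicate (n - 1) (Jblock n) @ Bmat n # replicate (d - 1) (Jblock n))
        \<in> span_JB n lo hi"
      using assms d2 n lo hi by (intro word_in_mat_span_words) auto
    then have "unit_mat n 0 d \<in> span_JB n lo hi"
      unfolding first_row_unit_mat_eq_word[OF n assms(1) dn]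
      by (rule mat_span_smult[OF _ words_JB_subset_carrier])
    then show ?case by simp
  next
    case (Suc r)
    have "unit_mat n r (r + d) \<in> span_JB n lo hi" using Suc by simp
    moreover have "unit_mat n r (r + d) - unit_mat n (r + 1) (r + 1 + d) \<in> span_JB n lo hi"
      using Suc by (intro unit_mat_diff_in_span_JB) simp
    ultimately have "unit_mat n r (r + d) - (unit_mat n r (r + d) - unit_mat n (r + 1) (r + 1 + d))
        \<in> span_JB n lo hi"
      by (rule mat_span_diff[OF _ _ words_JB_subset_carrier])
    then show ?case by (simp add: mat_diff_diff_cancel[OF unit_mat_carrier unit_mat_carrier])
  qed
qed

lemma carrier_mat_subset_span_JB:
  assumes E00: "unit_mat n 0 0 \<in> span_JB n lo hi"
  shows "carrier_mat n n \<subseteq> span_JB n lo hi"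
proof (rule carrier_mat_subset_mat_span_unit_mats[OF words_JB_subset_carrier])
  fix a b assume ab: "a < n" "b < n"
  consider "b < a" | "a = b" | "a < b" by linarith
  then show "unit_mat n a b \<in> span_JB n lo hi"
  proof cases
    case 1 then show ?thesis using lower_unit_mat_in_span_JB ab by auto
  next
    case 2
    have diffs: "unit_mat n r r - unit_mat n (Suc r) (Suc r) \<in> span_JB n lo hi" if "Suc r < n" for r
      using unit_mat_diff_in_span_JB[of r 0] that by simp
    show ?thesis
      using diagonal_unit_mats_in_mat_span[OF words_JB_subset_carrier E00 diffs] ab 2 by simp
  next
    case 3 then show ?thesis using upper_unit_mat_in_span_JB[of "b - a" a] ab by auto
  qed
qed

end

lemma unit_mat_0_0_in_span_JB:
  assumes n: "3 \<le> n" and hi: "2 * n - 3 \<le> hi"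
  shows "unit_mat n 0 0 \<in> span_JB n 0 hi"
proof (rule unit_mat_0_0_in_mat_span_of_one[OF words_JB_subset_carrier])
  show "1\<^sub>m n \<in> span_JB n 0 hi"
    using word_in_mat_span_words[of "{Jblock n, Bmat n}" n "[]" 0 hi] by (simp add: word_prod_Nil)
  show "unit_mat n r r - unit_mat n (Suc r) (Suc r) \<in> span_JB n 0 hi" if "Suc r < n" for r
    using unit_mat_diff_in_span_JB[OF n _ hi, where lo = 0 and r = r and d = 0] that by simp
qed (use n in simp)

text \<open>Without the identity: 2 E(0,0) = (E(0,0) + E(1,1)) + (E(0,0) - E(1,1)), the first summand being
  the word J^(n-2) B J^(n-2) B of length 2n - 2.\<close>

lemma unit_mat_0_0_in_nonunital_span_JB:
  assumes n: "3 \<le> n" and hi: "2 * n - 2 \<le> hi"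
  shows "unit_mat n 0 0 \<in> span_JB n 1 hi"
proof -
  let ?V = "span_JB n 1 hi"
  note Vc = words_JB_subset_carrier[of n 1 hi]
  have n1: "0 + 1 < n" using n by simp
  have "unit_mat n 0 0 - unit_mat n 1 1 \<in> ?V"
    using unit_mat_diff_in_span_JB[OF n, where lo = 1 and hi = hi and r = 0 and d = 0] n hi by simp
  moreover have "unit_mat n 0 0 + unit_mat n 1 1 \<in> ?V"
  proof -
    have "word_prod n (replicate (n - 2) (Jblock n) @ Bmat n # replicate (n - 2) (Jblock n) @ Bmat n # replicate 0 (Jblock n)) \<in> ?V"
      using n hi by (intro word_in_mat_span_words) auto
    then show ?thesis using diagonal_unit_mat_pair_eq_word[OF n n1] by simp
  qed
  ultimately have "(1/2) \<cdot>\<^sub>m ((unit_mat n 0 0 + unit_mat n 1 1) + (unit_mat n 0 0 - unit_mat n 1 1)) \<in> ?V"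
    by (intro mat_span_smult[OF mat_span_add[OF _ _ Vc] Vc])
  moreover have "(1/2) \<cdot>\<^sub>m ((unit_mat n 0 0 + unit_mat n 1 1) + (unit_mat n 0 0 - unit_mat n 1 1))
      = (unit_mat n 0 0 :: complex mat)"
    by (intro eq_matI) (auto simp: index_unit_mat)
  ultimately show ?thesis by simp
qed

lemma span_JB_eq_carrier:
  assumes n: "3 \<le> n" and hi: "2 * n - 3 \<le> hi"
  shows "span_JB n 0 hi = carrier_mat n n"
proof
  show "span_JB n 0 hi \<subseteq> carrier_mat n n" by (rule mat_span_carrier[OF words_JB_subset_carrier])
  show "carrier_mat n n \<subseteq> span_JB n 0 hi"
    by (rule carrier_mat_subset_span_JB[OF n _ hi unit_mat_0_0_in_span_JB[OF n hi]]) simp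
qed

lemma nonunital_span_JB_eq_carrier:
  assumes n: "3 \<le> n" and hi: "2 * n - 2 \<le> hi"
  shows "span_JB n 1 hi = carrier_mat n n"
proof
  show "span_JB n 1 hi \<subseteq> carrier_mat n n" by (rule mat_span_carrier[OF words_JB_subset_carrier])
  have hi': "2 * n - 3 \<le> hi" using hi by simp
  show "carrier_mat n n \<subseteq> span_JB n 1 hi"
    by (rule carrier_mat_subset_span_JB[OF n _ hi' unit_mat_0_0_in_nonunital_span_JB[OF n hi]]) simp
qed

lemma Lalg_JB:
  assumes "3 \<le> n"
  shows "Lalg n {Jblock n, Bmat n} = carrier_mat n n"
proof
  show "Lalg n {Jblock n, Bmat n} \<subseteq> carrier_mat n n"
    unfolding Lalg_def Lk_def using mat_span_carrier[OF words_JB_subset_carrier] by blast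
  show "carrier_mat n n \<subseteq> Lalg n {Jblock n, Bmat n}"
    unfolding Lalg_def Lk_def using span_JB_eq_carrier[OF assms order_refl] by blast
qed

lemma lenL_JB:
  assumes n: "3 \<le> n"
  shows "lenL n {Jblock n, Bmat n} = 2 * n - 3"
  unfolding lenL_def Lk_def
proof (rule Least_equality)
  show "span_JB n 0 (2 * n - 3) = span_JB n 0 (Suc (2 * n - 3))"
    using span_JB_eq_carrier[OF n] by simp
  show "2 * n - 3 \<le> y" if eq: "span_JB n 0 y = span_JB n 0 (Suc y)" for y
  proof (rule ccontr)
    assume "\<not> 2 * n - 3 \<le> y"
    then have "Suc y \<le> 2 * n - 3" by simp
    then show False using span_JB_strict_step[OF n le0] eq by simp
  qed
qed

lemma lenL0_JB:
  assumes n: "3 \<le> n"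
  shows "lenL0 n {Jblock n, Bmat n} = 2 * n - 2"
  unfolding lenL0_def L0k_def
proof (rule Least_equality)
  show "span_JB n 1 (2 * n - 2) = span_JB n 1 (Suc (2 * n - 2))"
    using nonunital_span_JB_eq_carrier[OF n] by simp
  show "2 * n - 2 \<le> y" if eq: "span_JB n 1 y = span_JB n 1 (Suc y)" for y
  proof (rule ccontr)
    assume "\<not> 2 * n - 2 \<le> y"
    then consider "Suc y \<le> 2 * n - 3" | "y = 2 * n - 3" using n by linarith
    then show False
    proof cases
      case 1 then show False using span_JB_strict_step[OF n order_refl] eq by simp
    next
      case 2 then show False using nonunital_span_JB_strict_step_top[OF n] eq by simp
    qed
  qed
qed

theorem mainTheorem6:
  fixes n :: nat
  assumes "n \<ge> 3"
  shows "Lalg n {Jblock n, Bmat n} = carrier_mat n n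
       \<and> lenL n {Jblock n, Bmat n} = 2*n - 3
       \<and> lenL0 n {Jblock n, Bmat n} = 2*n - 2"
  using Lalg_JB[OF assms] lenL_JB[OF assms] lenL0_JB[OF assms] by simp

end
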